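(* Let $m>n$ be positive integers and let $G[V_1,V_2]$ be a balanced bipartite graph on $2(m+n-1)$ vertices (so $|V_1|=|V_2|=m+n-1$) with minimum degree $\delta(G)>\frac{3}{4}(m+n-1)$. Suppose a red-blue coloring of the edges of $G$ has no blue connected $n$-matching. Suppose further that $\mathcal{B}$ is a largest blue component of $G$ (one with the maximum number of vertices among all blue components) and that $|V(\mathcal{B})\cap V_i|\ge n$ for each $i\in\{1,2\}$. Let $S$ be a minimum vertex cover of $\mathcal{B}$. Then there is a red component of $G$ containing $V(\mathcal{B})\setminus S$.
   Context: For a red-blue edge coloring of $G$, the red subgraph (resp. blue subgraph) is the spanning subgraph of $G$ consisting of all red (resp. blue) edges; a red (blue) component is a connected component of it. A connected $k$-matching in a graph $H$ is a matching with $k$ edges all lying in a single connected component of $H$; a blue connected $k$-matching is a connected $k$-matching in the blue subgraph. A vertex cover of a graph is a set of vertices containing at least one endpoint of every edge; a minimum vertex cover is one of smallest size. *)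

theory Defs
  imports Complex_Main
begin

text \<open>Graphs: vertex set V, edge set F of 2-element subsets of V.
  A spanning subgraph is given by the same V and a subset of the edges.\<close>

definition walk_rel :: "'a set \<Rightarrow> 'a set set \<Rightarrow> 'a \<Rightarrow> 'a \<Rightarrow> bool" where
  "walk_rel V F = (\<lambda>x y. {x, y} \<in> F \<and> x \<in> V \<and> y \<in> V)"

definition is_component :: "'a set \<Rightarrow> 'a set set \<Rightarrow> 'a set \<Rightarrow> bool" where
  "is_component V F C \<longleftrightarrow> (\<exists>u\<in>V. C = {v \<in> V. (walk_rel V F)\<^sup>*\<^sup>* u v})"

definition is_matching :: "'a set set \<Rightarrow> bool" where
  "is_matching M \<longleftrightarrow> (\<forall>e\<in>M. \<forall>e'\<in>M. e \<noteq> e' \<longrightarrow> e \<inter> e' = {})"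

definition has_connected_matching :: "'a set \<Rightarrow> 'a set set \<Rightarrow> nat \<Rightarrow> bool" where
  "has_connected_matching V F k \<longleftrightarrow>
     (\<exists>M C. M \<subseteq> F \<and> is_matching M \<and> card M = k \<and> is_component V F C \<and> \<Union>M \<subseteq> C)"

text \<open>Vertex cover of the component with vertex set C of (V, F): the component's
  edges are exactly the edges of F inside C.\<close>
definition is_vertex_cover_comp :: "'a set set \<Rightarrow> 'a set \<Rightarrow> 'a set \<Rightarrow> bool" where
  "is_vertex_cover_comp F C S \<longleftrightarrow> S \<subseteq> C \<and> (\<forall>e\<in>F. e \<subseteq> C \<longrightarrow> e \<inter> S \<noteq> {})"

definition is_min_vertex_cover_comp :: "'a set set \<Rightarrow> 'a set \<Rightarrow> 'a set \<Rightarrow> bool" where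
  "is_min_vertex_cover_comp F C S \<longleftrightarrow> is_vertex_cover_comp F C S \<and>
     (\<forall>T. is_vertex_cover_comp F C T \<longrightarrow> card S \<le> card T)"

definition degree :: "'a set set \<Rightarrow> 'a \<Rightarrow> nat" where
  "degree E v = card {u. {u, v} \<in> E}"

end

theory Submission
  imports Defs
begin

text \<open>Koenig's theorem turns the absence of a blue connected \<open>n\<close>-matching into \<open>|S| < n\<close>.
  An edge from an uncovered vertex of \<open>B\<close> to a vertex outside \<open>S\<close> cannot be blue (it would
  lie in \<open>B\<close> and miss the cover), so it is red. Two vertices on the same side have more
  than \<open>N/2 \<ge> n > |S|\<close> common neighbours, one of them outside \<open>S\<close>, so each side of
  \<open>B - S\<close> is red-connected. If \<open>x\<close> on one side and \<open>w\<close> on the other were not, then \<open>w\<close>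
  would have no neighbour on the side of \<open>x\<close> and vice versa, so both sides of \<open>B - S\<close> have
  fewer than \<open>N/4\<close> vertices and \<open>|B| < N\<close>. But the neighbourhoods of \<open>w\<close> and \<open>x\<close> outside
  \<open>S\<close> have more than \<open>N/2\<close> vertices each, every edge between them is blue, and by density
  they lie in one blue component with more than \<open>N\<close> vertices.\<close>

section \<open>Hall's and Koenig's theorems\<close>

definition hall_condition :: "'i set \<Rightarrow> ('i \<Rightarrow> 'b set) \<Rightarrow> bool" where
  "hall_condition I S \<longleftrightarrow> (\<forall>J\<subseteq>I. card J \<le> card (\<Union>(S ` J)))"

lemma hall_condition_subset: "hall_condition I S \<Longrightarrow> J \<subseteq> I \<Longrightarrow> hall_condition J S"
  unfolding hall_condition_def by blast

lemma hall_condition_remove_tight: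
  assumes "finite I" and "\<forall>i\<in>I. finite (S i)" and "hall_condition I S"
    and "J \<subseteq> I" and tight: "card (\<Union>(S ` J)) = card J"
  shows "hall_condition (I - J) (\<lambda>i. S i - \<Union>(S ` J))"
  unfolding hall_condition_def
proof (intro allI impI)
  fix K assume K: "K \<subseteq> I - J"
  have KJ: "K \<union> J \<subseteq> I" using K \<open>J \<subseteq> I\<close> by blast
  then have "finite (K \<union> J)" using assms(1) by (rule finite_subset)
  then have fin: "finite K" "finite J" "finite (\<Union>(S ` (K \<union> J)))"
    using KJ assms(2) by auto
  have "card K + card J = card (K \<union> J)"
    using K fin by (subst card_Un_disjoint) auto
  also have "\<dots> \<le> card (\<Union>(S ` (K \<union> J)))"
    using assms(3) KJ unfolding hall_condition_def by blast
  also have "\<Union>(S ` (K \<union> J)) = (\<Union>i\<in>K. S i - \<Union>(S ` J)) \<union> \<Union>(S ` J)" by blast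
  also have "card \<dots> = card (\<Union>i\<in>K. S i - \<Union>(S ` J)) + card (\<Union>(S ` J))"
    by (rule card_Un_disjoint) (use fin(3) in \<open>auto elim: finite_subset[rotated]\<close>)
  finally show "card K \<le> card (\<Union>i\<in>K. S i - \<Union>(S ` J))" using tight by simp
qed

lemma hall_condition_remove_one:
  assumes "finite I" and "\<forall>i\<in>I. finite (S i)" and "i0 \<in> I"
    and surplus: "\<forall>J. J \<subset> I \<longrightarrow> J \<noteq> {} \<longrightarrow> card J < card (\<Union>(S ` J))"
  shows "hall_condition (I - {i0}) (\<lambda>i. S i - {x})"
  unfolding hall_condition_def
proof (intro allI impI)
  fix K assume K: "K \<subseteq> I - {i0}"
  show "card K \<le> card (\<Union>i\<in>K. S i - {x})"
  proof (cases "K = {}")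
    case False
    then have "card K < card (\<Union>(S ` K))" using surplus K \<open>i0 \<in> I\<close> by blast
    also have "\<dots> \<le> card (\<Union>(S ` K) - {x}) + 1" by (simp add: card_Diff_singleton_if) arith
    also have "\<Union>(S ` K) - {x} = (\<Union>i\<in>K. S i - {x})" by blast
    finally show ?thesis by simp
  qed simp
qed

lemma inj_on_glue:
  assumes f: "inj_on f A" and g: "inj_on g B" and disj: "f ` A \<inter> g ` B = {}"
  shows "inj_on (\<lambda>x. if x \<in> A then f x else g x) (A \<union> B)"
proof (rule inj_onI)
  fix x y assume x: "x \<in> A \<union> B" and y: "y \<in> A \<union> B"
    and eq: "(if x \<in> A then f x else g x) = (if y \<in> A then f y else g y)"
  have mixed: False if "u \<in> A" "v \<notin> A" "v \<in> A \<union> B" "f u = g v" for u v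
  proof -
    have "f u \<in> f ` A" using that(1) by (rule imageI)
    moreover have "f u \<in> g ` B" unfolding that(4) using that(2,3) by simp
    ultimately show False using disj by blast
  qed
  show "x = y"
  proof (cases "x \<in> A"; cases "y \<in> A")
    assume "x \<in> A" "y \<in> A"
    then show ?thesis using eq by (simp add: inj_onD[OF f])
  next
    assume "x \<notin> A" "y \<notin> A"
    then show ?thesis using x y eq by (simp add: inj_onD[OF g])
  next
    assume "x \<in> A" "y \<notin> A"
    then show ?thesis using mixed[of x y] y eq by simp
  next
    assume "x \<notin> A" "y \<in> A"
    then show ?thesis using mixed[of y x] x eq by simp
  qed
qed

lemma distinct_representatives_split:
  assumes "J \<subseteq> I" and "inj_on f1 J" "\<forall>i\<in>J. f1 i \<in> S i"
    and "inj_on f2 (I - J)" "\<forall>i\<in>I - J. f2 i \<in> S i - \<Union>(S ` J)"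
  shows "\<exists>f. inj_on f I \<and> (\<forall>i\<in>I. f i \<in> S i)"
proof -
  define f where "f i = (if i \<in> J then f1 i else f2 i)" for i
  have "f1 ` J \<subseteq> \<Union>(S ` J)" "f2 ` (I - J) \<inter> \<Union>(S ` J) = {}" using assms(3,5) by auto
  then have "f1 ` J \<inter> f2 ` (I - J) = {}" by blast
  then have "inj_on f (J \<union> (I - J))" unfolding f_def using assms(2,4) by (rule inj_on_glue[rotated 2])
  then have "inj_on f I" using assms(1) by (simp add: Un_absorb1)
  moreover have "\<forall>i\<in>I. f i \<in> S i"
    using assms(3,5) unfolding f_def by (simp split: if_split)
  ultimately show ?thesis by blast
qed

lemma distinct_representatives_insert:
  assumes "i0 \<in> I" and "x \<in> S i0" and "inj_on f (I - {i0})" "\<forall>i\<in>I - {i0}. f i \<in> S i - {x}"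
  shows "\<exists>f. inj_on f I \<and> (\<forall>i\<in>I. f i \<in> S i)"
proof -
  have "x \<notin> f ` (I - {i0})" using assms(4) by blast
  then have "inj_on (f(i0 := x)) (I - {i0})" and "x \<notin> (f(i0 := x)) ` (I - {i0})"
    using inj_on_fun_updI[OF assms(3)] by simp_all
  then have "inj_on (f(i0 := x)) (insert i0 (I - {i0}))" unfolding inj_on_insert by simp
  then have "inj_on (f(i0 := x)) I" using assms(1) by (simp add: insert_absorb)
  moreover have "\<forall>i\<in>I. (f(i0 := x)) i \<in> S i" using assms(2,4) by simp
  ultimately show ?thesis by blast
qed

text \<open>Halmos and Vaughan's induction: split at a proper subfamily that is tight, or, if every
  proper subfamily has surplus, fix any representative of one index.\<close>
theorem hall_marriage:
  fixes I :: "'i set" and S :: "'i \<Rightarrow> 'b set"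
  assumes "finite I" and "\<forall>i\<in>I. finite (S i)" and "hall_condition I S"
  shows "\<exists>f. inj_on f I \<and> (\<forall>i\<in>I. f i \<in> S i)"
  using assms
proof (induction "card I" arbitrary: I S rule: less_induct)
  case less
  show ?case
  proof (cases "\<exists>J. J \<subset> I \<and> J \<noteq> {} \<and> card (\<Union>(S ` J)) = card J")
    case True
    then obtain J where J: "J \<subset> I" "J \<noteq> {}" "card (\<Union>(S ` J)) = card J" by blast
    have "I - J \<subset> I" using J(1,2) by blast
    then have smaller: "card J < card I" "card (I - J) < card I"
      using J(1) less.prems(1) by (simp_all add: psubset_card_mono)
    have "finite J" "finite (I - J)" using J(1) less.prems(1) finite_subset by blast+
    moreover have "\<forall>i\<in>J. finite (S i)" "\<forall>i\<in>I - J. finite (S i - \<Union>(S ` J))"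
      using J(1) less.prems(2) by auto
    moreover have "hall_condition J S" "hall_condition (I - J) (\<lambda>i. S i - \<Union>(S ` J))"
      using J less.prems hall_condition_subset hall_condition_remove_tight by (blast, blast)
    ultimately obtain f1 f2 where "inj_on f1 J" "\<forall>i\<in>J. f1 i \<in> S i"
      and "inj_on f2 (I - J)" "\<forall>i\<in>I - J. f2 i \<in> S i - \<Union>(S ` J)"
      using less.hyps[OF smaller(1)] less.hyps[OF smaller(2)] by metis
    then show ?thesis using J(1) by (intro distinct_representatives_split) auto
  next
    case False
    have surplus: "\<forall>J. J \<subset> I \<longrightarrow> J \<noteq> {} \<longrightarrow> card J < card (\<Union>(S ` J))"
    proof (intro allI impI)
      fix J assume "J \<subset> I" "J \<noteq> {}"
      then have "card J \<le> card (\<Union>(S ` J))" "card (\<Union>(S ` J)) \<noteq> card J"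
        using less.prems(3) False unfolding hall_condition_def by auto
      then show "card J < card (\<Union>(S ` J))" by simp
    qed
    show ?thesis
    proof (cases "I = {}")
      case False
      then obtain i0 where i0: "i0 \<in> I" by blast
      then have "card {i0} \<le> card (\<Union>(S ` {i0}))"
        using less.prems(3) unfolding hall_condition_def by blast
      then have "S i0 \<noteq> {}" by auto
      then obtain x where x: "x \<in> S i0" by blast
      have "card (I - {i0}) < card I" using less.prems(1) i0 by (rule card_Diff1_less)
      moreover have "\<forall>i\<in>I - {i0}. finite (S i - {x})" using less.prems(2) by blast
      ultimately obtain f where f: "inj_on f (I - {i0})" "\<forall>i\<in>I - {i0}. f i \<in> S i - {x}"
        using less.hyps less.prems(1) hall_condition_remove_one[OF less.prems(1,2) i0 surplus]
        by (metis finite_Diff)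
      show ?thesis by (rule distinct_representatives_insert[OF i0 x f])
    qed simp
  qed
qed

definition deficiency :: "('a \<Rightarrow> 'b set) \<Rightarrow> 'a set \<Rightarrow> int" where
  "deficiency N X = int (card X) - int (card (\<Union>(N ` X)))"

lemma hall_condition_outside_max_deficiency:
  assumes "finite A" and "finite (\<Union>(N ` A))" and "X0 \<subseteq> A"
    and max: "\<And>X. X \<subseteq> A \<Longrightarrow> deficiency N X \<le> deficiency N X0"
  shows "hall_condition (A - X0) (\<lambda>a. N a - \<Union>(N ` X0))"
  unfolding hall_condition_def
proof (intro allI impI)
  fix K assume K: "K \<subseteq> A - X0"
  have KX0: "K \<union> X0 \<subseteq> A" using K \<open>X0 \<subseteq> A\<close> by blast
  have fin: "finite (K \<union> X0)" "finite (\<Union>(N ` (K \<union> X0)))"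
    using finite_subset[OF KX0 assms(1)] finite_subset[OF Union_mono[OF image_mono[OF KX0]] assms(2)] .
  have "(\<Union>a\<in>K. N a - \<Union>(N ` X0)) = \<Union>(N ` (K \<union> X0)) - \<Union>(N ` X0)" by blast
  also have "card \<dots> = card (\<Union>(N ` (K \<union> X0))) - card (\<Union>(N ` X0))"
    using finite_subset[OF _ fin(2)] by (rule card_Diff_subset) blast+
  finally have "card (\<Union>a\<in>K. N a - \<Union>(N ` X0)) = \<dots>" .
  moreover have "card (K \<union> X0) = card K + card X0" using K fin(1) by (subst card_Un_disjoint) auto
  moreover have "deficiency N (K \<union> X0) \<le> deficiency N X0" using KX0 by (rule max)
  ultimately show "card K \<le> card (\<Union>a\<in>K. N a - \<Union>(N ` X0))"
    unfolding deficiency_def by linarith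
qed

lemma hall_condition_inside_max_deficiency:
  assumes "finite A" and "finite (\<Union>(N ` A))" and "X0 \<subseteq> A"
    and max: "\<And>X. X \<subseteq> A \<Longrightarrow> deficiency N X \<le> deficiency N X0"
  shows "hall_condition (\<Union>(N ` X0)) (\<lambda>b. {a \<in> X0. b \<in> N a})"
  unfolding hall_condition_def
proof (intro allI impI)
  fix T assume T: "T \<subseteq> \<Union>(N ` X0)"
  define P where "P = (\<Union>b\<in>T. {a \<in> X0. b \<in> N a})"
  have P_subset: "P \<subseteq> X0" unfolding P_def by blast
  have fin: "finite X0" "finite (\<Union>(N ` X0))"
    using finite_subset[OF \<open>X0 \<subseteq> A\<close> assms(1)]
      finite_subset[OF Union_mono[OF image_mono[OF \<open>X0 \<subseteq> A\<close>]] assms(2)] .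
  \<comment> \<open>removing the partners P of T from X0 loses all of T from the neighbourhood\<close>
  have "\<Union>(N ` (X0 - P)) \<subseteq> \<Union>(N ` X0) - T" unfolding P_def by blast
  then have "card (\<Union>(N ` (X0 - P))) \<le> card (\<Union>(N ` X0) - T)"
    using fin(2) by (intro card_mono) auto
  also have "\<dots> = card (\<Union>(N ` X0)) - card T"
    using finite_subset[OF T fin(2)] T by (rule card_Diff_subset)
  finally have "card (\<Union>(N ` (X0 - P))) \<le> card (\<Union>(N ` X0)) - card T" .
  moreover have "card (X0 - P) = card X0 - card P"
    using finite_subset[OF P_subset fin(1)] P_subset by (rule card_Diff_subset)
  moreover have "card P \<le> card X0" using fin(1) P_subset by (rule card_mono)
  moreover have "card T \<le> card (\<Union>(N ` X0))" using fin(2) T by (rule card_mono)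
  moreover have "deficiency N (X0 - P) \<le> deficiency N X0" using \<open>X0 \<subseteq> A\<close> by (intro max) blast
  ultimately show "card T \<le> card P" unfolding deficiency_def by linarith
qed

lemma matching_of_partner_map:
  assumes inj: "inj_on p W" and disj: "W \<inter> p ` W = {}"
  shows "is_matching ((\<lambda>w. {w, p w}) ` W)" and "card ((\<lambda>w. {w, p w}) ` W) = card W"
proof -
  show "is_matching ((\<lambda>w. {w, p w}) ` W)"
    unfolding is_matching_def
  proof (intro ballI impI)
    fix e e' assume "e \<in> (\<lambda>w. {w, p w}) ` W" "e' \<in> (\<lambda>w. {w, p w}) ` W" "e \<noteq> e'"
    then obtain v w where vw: "v \<in> W" "w \<in> W" "e = {v, p v}" "e' = {w, p w}" "v \<noteq> w" by blast
    then have "p v \<noteq> p w" using inj by (meson inj_onD)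
    moreover have "v \<noteq> p w" "w \<noteq> p v" using vw(1,2) disj by blast+
    ultimately show "e \<inter> e' = {}" using vw by auto
  qed
  have "inj_on (\<lambda>w. {w, p w}) W"
  proof (rule inj_onI)
    fix v w assume "v \<in> W" "w \<in> W" "{v, p v} = {w, p w}"
    moreover have "v \<noteq> p w" using \<open>v \<in> W\<close> \<open>w \<in> W\<close> disj by blast
    ultimately show "v = w" by (auto simp: doubleton_eq_iff)
  qed
  then show "card ((\<lambda>w. {w, p w}) ` W) = card W" by (rule card_image)
qed

text \<open>For \<open>X0\<close> of maximal deficiency, Hall's theorem matches \<open>V1 - X0\<close> into \<open>V2 - N(X0)\<close>
  and \<open>N(X0)\<close> into \<open>X0\<close>; \<open>W\<close> is the vertex cover of Koenig's theorem.\<close>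
lemma koenig_partner_map:
  assumes "finite V1" and "finite V2" and "V1 \<inter> V2 = {}"
    and N: "\<And>a. N a = {b \<in> V2. {a, b} \<in> F}"
    and X0: "X0 \<subseteq> V1" and max: "\<And>X. X \<subseteq> V1 \<Longrightarrow> deficiency N X \<le> deficiency N X0"
  defines "W \<equiv> (V1 - X0) \<union> \<Union>(N ` X0)"
  shows "\<exists>p. inj_on p W \<and> W \<inter> p ` W = {} \<and> (\<forall>w\<in>W. {w, p w} \<in> F)"
proof -
  define NX0 where "NX0 = \<Union>(N ` X0)"
  have N_V2: "N a \<subseteq> V2" for a unfolding N by blast
  have NX0_V2: "NX0 \<subseteq> V2" unfolding NX0_def using N_V2 by blast
  have finN: "finite (\<Union>(N ` V1))" using N_V2 assms(2) by (meson UN_least finite_subset)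
  have fin: "finite (V1 - X0)" "finite NX0" "finite X0"
    using assms(1) finite_subset[OF NX0_V2 assms(2)] finite_subset[OF X0 assms(1)] by simp_all
  have "\<forall>a\<in>V1 - X0. finite (N a - NX0)" using finite_subset[OF N_V2 assms(2)] by blast
  then obtain f where f: "inj_on f (V1 - X0)" "\<forall>a\<in>V1 - X0. f a \<in> N a - NX0"
    using hall_marriage[OF fin(1) _ hall_condition_outside_max_deficiency[OF assms(1) finN X0 max]]
    unfolding NX0_def by blast
  have "\<forall>b\<in>NX0. finite {a \<in> X0. b \<in> N a}" using fin(3) by simp
  then obtain g where g: "inj_on g NX0" "\<forall>b\<in>NX0. g b \<in> {a \<in> X0. b \<in> N a}"
    using hall_marriage[OF fin(2)[unfolded NX0_def] _
        hall_condition_inside_max_deficiency[OF assms(1) finN X0 max]]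
    unfolding NX0_def by blast
  define p where "p w = (if w \<in> V1 - X0 then f w else g w)" for w
  have "f ` (V1 - X0) \<subseteq> V2" "g ` NX0 \<subseteq> V1" using f(2) g(2) N_V2 X0 by blast+
  then have "f ` (V1 - X0) \<inter> g ` NX0 = {}" using assms(3) by blast
  then have inj: "inj_on p W"
    unfolding p_def W_def NX0_def[symmetric] using f(1) g(1) by (rule inj_on_glue[rotated 2])
  have outside: "p w \<in> V2 - NX0" "{w, p w} \<in> F" if "w \<in> V1 - X0" for w
  proof -
    have "p w \<in> N w - NX0" using that f(2) by (simp add: p_def)
    then show "p w \<in> V2 - NX0" "{w, p w} \<in> F" unfolding N by blast+
  qed
  have inside: "p w \<in> X0" "{w, p w} \<in> F" if "w \<in> NX0" for w
  proof -
    have "w \<notin> V1" using that NX0_V2 assms(3) by blast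
    then have "p w \<in> X0 \<and> w \<in> N (p w)" using that g(2) by (simp add: p_def)
    then show "p w \<in> X0" "{w, p w} \<in> F" unfolding N by (auto simp: insert_commute)
  qed
  have "p ` W \<subseteq> (V2 - NX0) \<union> X0" unfolding W_def NX0_def[symmetric] using outside(1) inside(1) by blast
  then have "W \<inter> p ` W = {}" using NX0_V2 X0 assms(3) unfolding W_def NX0_def[symmetric] by blast
  moreover have "\<forall>w\<in>W. {w, p w} \<in> F" unfolding W_def NX0_def[symmetric] using outside(2) inside(2) by blast
  ultimately show ?thesis using inj by blast
qed

theorem koenig_matching_cover:
  assumes "finite V1" and "finite V2" and "V1 \<inter> V2 = {}"
    and bipartite: "F \<subseteq> {{u, v} | u v. u \<in> V1 \<and> v \<in> V2}"
  shows "\<exists>M W. M \<subseteq> F \<and> is_matching M \<and> W \<subseteq> V1 \<union> V2 \<and> (\<forall>e\<in>F. e \<inter> W \<noteq> {})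
    \<and> card M = card W"
proof -
  define N where "N a = {b \<in> V2. {a, b} \<in> F}" for a
  have "finite (deficiency N ` Pow V1)" "deficiency N ` Pow V1 \<noteq> {}" using assms(1) by auto
  then obtain X0 where "X0 \<in> Pow V1" "deficiency N X0 = Max (deficiency N ` Pow V1)"
    by (metis Max_in imageE)
  then have X0: "X0 \<subseteq> V1" and max: "\<And>X. X \<subseteq> V1 \<Longrightarrow> deficiency N X \<le> deficiency N X0"
    using \<open>finite (deficiency N ` Pow V1)\<close> by auto
  define W where "W = (V1 - X0) \<union> \<Union>(N ` X0)"
  obtain p where p: "inj_on p W" "W \<inter> p ` W = {}" "\<forall>w\<in>W. {w, p w} \<in> F"
    using koenig_partner_map[OF assms(1-3) N_def X0 max] unfolding W_def by blast
  have "W \<subseteq> V1 \<union> V2" unfolding W_def N_def by blast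
  moreover have "\<forall>e\<in>F. e \<inter> W \<noteq> {}"
  proof
    fix e assume "e \<in> F"
    then obtain u v where "e = {u, v}" "u \<in> V1" "v \<in> N u" using bipartite unfolding N_def by blast
    then show "e \<inter> W \<noteq> {}" unfolding W_def by blast
  qed
  moreover have "(\<lambda>w. {w, p w}) ` W \<subseteq> F" using p(3) by blast
  ultimately show ?thesis using matching_of_partner_map[OF p(1,2)]
    by (intro exI[of _ "(\<lambda>w. {w, p w}) ` W"] exI[of _ W]) simp
qed

section \<open>Components and vertex covers\<close>

abbreviation reachable :: "'a set \<Rightarrow> 'a set set \<Rightarrow> 'a \<Rightarrow> 'a \<Rightarrow> bool" where
  "reachable V F \<equiv> (walk_rel V F)\<^sup>*\<^sup>*"

lemma reachable_sym: "reachable V F x y \<Longrightarrow> reachable V F y x"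
proof -
  have "symp (walk_rel V F)" by (auto simp: symp_def walk_rel_def insert_commute)
  then show "reachable V F x y \<Longrightarrow> reachable V F y x" by (metis symp_rtranclp sympD)
qed

lemma reachable_edge: "{x, y} \<in> F \<Longrightarrow> x \<in> V \<Longrightarrow> y \<in> V \<Longrightarrow> reachable V F x y"
  by (simp add: walk_rel_def r_into_rtranclp)

lemma component_subset: "is_component V F C \<Longrightarrow> C \<subseteq> V"
  unfolding is_component_def by blast

lemma component_edge_closed:
  assumes "is_component V F C" and "x \<in> C" and "{x, y} \<in> F" and "y \<in> V"
  shows "y \<in> C"
proof -
  obtain u where u: "u \<in> V" "C = {v \<in> V. reachable V F u v}"
    using assms(1) unfolding is_component_def by blast
  then have "reachable V F u x" "x \<in> V" using assms(2) by auto
  then have "reachable V F u y" using assms(3,4) by (meson reachable_edge rtranclp_trans)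
  then show "y \<in> C" using u assms(4) by blast
qed

lemma vertex_cover_edge_from_uncovered:
  assumes C: "is_component V F C" and S: "is_vertex_cover_comp F C S"
    and x: "x \<in> C - S" and e: "{x, y} \<in> F" and y: "y \<in> V"
  shows "y \<in> S"
proof -
  have "y \<in> C" using component_edge_closed[OF C _ e y] x by blast
  with x have "{x, y} \<subseteq> C" by blast
  then have "{x, y} \<inter> S \<noteq> {}" using S e unfolding is_vertex_cover_comp_def by blast
  then show "y \<in> S" using x by auto
qed

lemma pairwise_reachable_in_component:
  assumes "V \<noteq> {}" and "X \<subseteq> V" and "\<And>x y. x \<in> X \<Longrightarrow> y \<in> X \<Longrightarrow> reachable V F x y"
  shows "\<exists>C. is_component V F C \<and> X \<subseteq> C"
proof -
  obtain u where "u \<in> V" "X \<noteq> {} \<Longrightarrow> u \<in> X" using assms(1,2) by blast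
  then show ?thesis using assms(2,3) unfolding is_component_def by blast
qed

lemma min_vertex_cover_card_less:
  assumes "finite V1" and "finite V2" and "V1 \<inter> V2 = {}"
    and bipartite: "F \<subseteq> {{u, v} | u v. u \<in> V1 \<and> v \<in> V2}"
    and no_matching: "\<not> has_connected_matching (V1 \<union> V2) F n"
    and C: "is_component (V1 \<union> V2) F C" and S: "is_min_vertex_cover_comp F C S"
  shows "card S < n"
proof (rule ccontr)
  assume "\<not> card S < n"
  have "{e \<in> F. e \<subseteq> C} \<subseteq> {{u, v} | u v. u \<in> V1 \<and> v \<in> V2}"
    by (rule subset_trans[OF _ bipartite]) blast
  from koenig_matching_cover[OF assms(1-3) this] obtain M W where M: "M \<subseteq> {e \<in> F. e \<subseteq> C}" "is_matching M"
    and W: "W \<subseteq> V1 \<union> V2" and cover: "\<forall>e\<in>{e \<in> F. e \<subseteq> C}. e \<inter> W \<noteq> {}"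
    and "card M = card W"
    by blast
  have "is_vertex_cover_comp F C (W \<inter> C)"
    using cover unfolding is_vertex_cover_comp_def by blast
  then have "card S \<le> card (W \<inter> C)" using S unfolding is_min_vertex_cover_comp_def by blast
  also have "\<dots> \<le> card W"
    using finite_subset[OF W] assms(1,2) by (simp add: card_mono)
  finally have "n \<le> card M" using \<open>card M = card W\<close> \<open>\<not> card S < n\<close> by linarith
  then obtain M' where M': "M' \<subseteq> M" "card M' = n" by (meson obtain_subset_with_card_n)
  have "M' \<subseteq> F" "\<Union>M' \<subseteq> C" using M'(1) M(1) by blast+
  moreover have "is_matching M'" using M'(1) M(2) unfolding is_matching_def by blast
  ultimately have "has_connected_matching (V1 \<union> V2) F n"
    unfolding has_connected_matching_def using M'(2) C by blast
  then show False using no_matching by contradiction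
qed

section \<open>Dense balanced bipartite graphs\<close>

definition neighbours :: "'a set set \<Rightarrow> 'a \<Rightarrow> 'a set" where
  "neighbours F v = {u. {u, v} \<in> F}"

lemma neighbours_sym: "y \<in> neighbours F z \<longleftrightarrow> z \<in> neighbours F y"
  unfolding neighbours_def by (simp add: insert_commute)

lemma card_add_le_card_Int:
  assumes "finite Q" and "A \<subseteq> Q" and "B \<subseteq> Q"
  shows "card A + card B \<le> card Q + card (A \<inter> B)"
proof -
  have "card A + card B = card (A \<union> B) + card (A \<inter> B)"
    using finite_subset[OF assms(2,1)] finite_subset[OF assms(3,1)] by (rule card_Un_Int)
  also have "card (A \<union> B) \<le> card Q" using assms by (simp add: card_mono)
  finally show ?thesis by linarith
qed

locale dense_bipartite =
  fixes V1 V2 :: "'a set" and E :: "'a set set" and N :: nat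
  assumes finite_V1: "finite V1" and finite_V2: "finite V2" and disjoint: "V1 \<inter> V2 = {}"
    and card_V1: "card V1 = N" and card_V2: "card V2 = N"
    and bipartite: "E \<subseteq> {{u, v} | u v. u \<in> V1 \<and> v \<in> V2}"
    and dense: "\<And>v. v \<in> V1 \<union> V2 \<Longrightarrow> 3 * N < 4 * card (neighbours E v)"
begin

lemma dense_bipartite_swap: "dense_bipartite V2 V1 E N"
proof
  show "E \<subseteq> {{u, v} | u v. u \<in> V2 \<and> v \<in> V1}" using bipartite insert_commute by blast
qed (use finite_V1 finite_V2 disjoint card_V1 card_V2 dense in auto)

lemma neighbours_V1_subset: "v \<in> V1 \<Longrightarrow> neighbours E v \<subseteq> V2"
proof
  fix u assume "v \<in> V1" "u \<in> neighbours E v"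
  then obtain a b where "{u, v} = {a, b}" "a \<in> V1" "b \<in> V2"
    using bipartite unfolding neighbours_def by blast
  then show "u \<in> V2" using \<open>v \<in> V1\<close> disjoint by (auto simp: doubleton_eq_iff)
qed

lemma neighbours_V2_subset: "v \<in> V2 \<Longrightarrow> neighbours E v \<subseteq> V1"
  by (rule dense_bipartite.neighbours_V1_subset[OF dense_bipartite_swap])

lemma card_sides: "A \<subseteq> V1 \<union> V2 \<Longrightarrow> card A = card (A \<inter> V1) + card (A \<inter> V2)"
proof -
  assume A: "A \<subseteq> V1 \<union> V2"
  then have "A - V1 = A \<inter> V2" using disjoint by blast
  moreover have "finite A" using A finite_V1 finite_V2 by (simp add: finite_subset)
  ultimately show ?thesis using card_Int_Diff[of A V1] by simp
qed

lemma edge_in_vertices: "{u, v} \<in> E \<Longrightarrow> u \<in> V1 \<union> V2"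
  using bipartite by (auto simp: doubleton_eq_iff)

lemma card_neighbours_Int:
  assumes "v \<in> V1" and "U \<subseteq> V2"
  shows "4 * card U < 4 * card (neighbours E v \<inter> U) + N"
  using card_add_le_card_Int[OF finite_V2 neighbours_V1_subset[OF assms(1)] assms(2)] dense[of v]
    assms(1) card_V2 by simp

lemma common_neighbour_in:
  assumes "x \<in> V1" and "x' \<in> V1" and U: "U \<subseteq> V2" "N \<le> 2 * card U"
  shows "\<exists>y\<in>U. y \<in> neighbours E x \<and> y \<in> neighbours E x'"
proof -
  have "4 * card U < 4 * card (neighbours E x \<inter> U) + N" "4 * card U < 4 * card (neighbours E x' \<inter> U) + N"
    using card_neighbours_Int[OF assms(1) U(1)] card_neighbours_Int[OF assms(2) U(1)] .
  moreover have "card (neighbours E x \<inter> U) + card (neighbours E x' \<inter> U)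
      \<le> card U + card ((neighbours E x \<inter> U) \<inter> (neighbours E x' \<inter> U))"
    using finite_subset[OF U(1) finite_V2] by (rule card_add_le_card_Int) auto
  ultimately have "(neighbours E x \<inter> U) \<inter> (neighbours E x' \<inter> U) \<noteq> {}"
    using U(2) by (intro notI) simp
  then show ?thesis by blast
qed

lemma large_sides_reachable:
  assumes U1: "U1 \<subseteq> V1" "N \<le> 2 * card U1" and U2: "U2 \<subseteq> V2" "N \<le> 2 * card U2"
    and edges: "\<And>y z. y \<in> U1 \<Longrightarrow> z \<in> U2 \<Longrightarrow> {y, z} \<in> E \<Longrightarrow> {y, z} \<in> F"
    and "a \<in> U1 \<union> U2" and "b \<in> U1 \<union> U2"
  shows "reachable (V1 \<union> V2) F a b"
proof -
  have step: "reachable (V1 \<union> V2) F y z" if "y \<in> U1" "z \<in> U2" "z \<in> neighbours E y" for y z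
  proof -
    have "{y, z} \<in> F" using edges that unfolding neighbours_def by (simp add: insert_commute)
    then show ?thesis using that U1(1) U2(1) by (intro reachable_edge) auto
  qed
  have U1_U1: "reachable (V1 \<union> V2) F y y'" if "y \<in> U1" "y' \<in> U1" for y y'
  proof -
    have "y \<in> V1" "y' \<in> V1" using that U1(1) by blast+
    then obtain z where "z \<in> U2" "z \<in> neighbours E y" "z \<in> neighbours E y'"
      using common_neighbour_in[OF _ _ U2] by blast
    then have "reachable (V1 \<union> V2) F y z" "reachable (V1 \<union> V2) F y' z"
      using step that by simp_all
    then show ?thesis using reachable_sym rtranclp_trans by metis
  qed
  have from_U1: "\<exists>y \<in> U1. reachable (V1 \<union> V2) F y z" if "z \<in> U1 \<union> U2" for z
  proof (cases "z \<in> U1")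
    case True
    then show ?thesis by (intro bexI[of _ z]) simp_all
  next
    case False
    then have "z \<in> U2" "z \<in> V2" using that U2(1) by blast+
    then obtain y where "y \<in> U1" "y \<in> neighbours E z"
      using dense_bipartite.common_neighbour_in[OF dense_bipartite_swap _ _ U1] by blast
    then show ?thesis using step[OF _ \<open>z \<in> U2\<close> neighbours_sym[THEN iffD1]] by blast
  qed
  obtain ya where ya: "ya \<in> U1" "reachable (V1 \<union> V2) F ya a" using from_U1[OF assms(6)] by blast
  obtain yb where yb: "yb \<in> U1" "reachable (V1 \<union> V2) F yb b" using from_U1[OF assms(7)] by blast
  have "reachable (V1 \<union> V2) F a yb"
    using reachable_sym[OF ya(2)] U1_U1[OF ya(1) yb(1)] by (rule rtranclp_trans)
  then show ?thesis using yb(2) by (rule rtranclp_trans)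
qed

end

text \<open>The absence of a blue connected \<open>n\<close>-matching enters only through \<open>card S < n\<close>,
  which follows from Koenig's theorem.\<close>
locale largest_blue_component = dense_bipartite +
  fixes blue :: "'a set set" and B S :: "'a set" and n :: nat
  assumes B_component: "is_component (V1 \<union> V2) blue B"
    and B_largest: "\<And>C. is_component (V1 \<union> V2) blue C \<Longrightarrow> card C \<le> card B"
    and S_cover: "is_vertex_cover_comp blue B S"
    and card_S: "card S < n" and two_n_le: "2 * n \<le> N"
    and n_le_B_V1: "n \<le> card (B \<inter> V1)" and n_le_B_V2: "n \<le> card (B \<inter> V2)"
begin

abbreviation red_reachable :: "'a \<Rightarrow> 'a \<Rightarrow> bool" where
  "red_reachable \<equiv> reachable (V1 \<union> V2) (E - blue)"

lemma largest_blue_component_swap: "largest_blue_component V2 V1 E N blue B S n"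
  using dense_bipartite_swap B_component B_largest S_cover card_S two_n_le n_le_B_V1 n_le_B_V2
  unfolding largest_blue_component_def largest_blue_component_axioms_def by (simp add: Un_commute)

lemma B_subset: "B \<subseteq> V1 \<union> V2"
  using B_component by (rule component_subset)

lemma S_subset: "S \<subseteq> B"
  using S_cover unfolding is_vertex_cover_comp_def by blast

lemma finite_S: "finite S"
  using finite_subset[OF subset_trans[OF S_subset B_subset]] finite_V1 finite_V2 by simp

lemma uncovered_edge_red:
  assumes x: "x \<in> B - S" and y: "y \<in> neighbours E x" "y \<notin> S"
  shows "red_reachable x y"
proof -
  have E': "{y, x} \<in> E" using y(1) unfolding neighbours_def by simp
  then have E: "{x, y} \<in> E" by (simp only: insert_commute)
  have V: "x \<in> V1 \<union> V2" "y \<in> V1 \<union> V2" using edge_in_vertices[OF E] edge_in_vertices[OF E'] .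
  have "{x, y} \<notin> blue"
    using vertex_cover_edge_from_uncovered[OF B_component S_cover x _ V(2)] y(2) by blast
  then show ?thesis using E V by (simp add: reachable_edge)
qed

lemma same_side_red_reachable:
  assumes x: "x \<in> (B - S) \<inter> V1" and x': "x' \<in> (B - S) \<inter> V1"
  shows "red_reachable x x'"
proof -
  have "card V2 - card S \<le> card (V2 - S)" using finite_S by (rule diff_card_le_card_Diff)
  then have "N \<le> 2 * card (V2 - S)" using card_V2 card_S two_n_le by linarith
  then obtain y where y: "y \<in> neighbours E x" "y \<in> neighbours E x'" "y \<notin> S"
    using common_neighbour_in[of x x' "V2 - S"] x x' by blast
  have "red_reachable x y" "red_reachable x' y" using uncovered_edge_red x x' y by simp_all
  then show ?thesis using reachable_sym rtranclp_trans by metis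
qed

lemma card_cover_side_less: "card (S \<inter> V1) < card ((B - S) \<inter> V2)"
proof -
  have "card S = card (S \<inter> V1) + card (S \<inter> V2)"
    using S_subset B_subset by (intro card_sides) blast
  moreover have "card (B \<inter> V2) = card (S \<inter> V2) + card ((B - S) \<inter> V2)"
  proof -
    have "(B \<inter> V2) \<inter> S = S \<inter> V2" "(B \<inter> V2) - S = (B - S) \<inter> V2" using S_subset by blast+
    then show ?thesis using card_Int_Diff[of "B \<inter> V2" S] finite_V2 by simp
  qed
  ultimately show ?thesis using card_S n_le_B_V2 by linarith
qed

lemma side_small_if_unreachable:
  assumes x: "x \<in> (B - S) \<inter> V1" and w: "w \<in> (B - S) \<inter> V2" and unreachable: "\<not> red_reachable x w"
  shows "4 * card ((B - S) \<inter> V1) < N"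
proof -
  have "(B - S) \<inter> V1 \<subseteq> V1 - neighbours E w"
  proof
    fix x' assume x': "x' \<in> (B - S) \<inter> V1"
    have "x' \<notin> neighbours E w"
    proof
      assume "x' \<in> neighbours E w"
      then have "red_reachable w x'" using uncovered_edge_red w x' by simp
      then have "red_reachable x w"
        using same_side_red_reachable[OF x x'] reachable_sym rtranclp_trans by metis
      then show False using unreachable by contradiction
    qed
    then show "x' \<in> V1 - neighbours E w" using x' by blast
  qed
  then have "card ((B - S) \<inter> V1) \<le> card (V1 - neighbours E w)" using finite_V1 by (intro card_mono) auto
  also have "\<dots> = N - card (neighbours E w)"
    using neighbours_V2_subset[of w] w card_V1 finite_V1 by (simp add: card_Diff_subset finite_subset)
  finally have "card ((B - S) \<inter> V1) \<le> N - card (neighbours E w)" .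
  moreover have "3 * N < 4 * card (neighbours E w)" using w by (intro dense) blast
  moreover have "card (neighbours E w) \<le> N"
    using neighbours_V2_subset[of w] w card_V1 finite_V1 by (metis IntD2 card_mono)
  ultimately show ?thesis by linarith
qed

lemma uncovered_neighbours_large:
  assumes w: "w \<in> V2" and small: "4 * card ((B - S) \<inter> V2) < N"
  shows "N < 2 * card (neighbours E w - S)"
proof -
  have "neighbours E w \<subseteq> (neighbours E w - S) \<union> (S \<inter> V1)" using neighbours_V2_subset[OF w] by blast
  then have "card (neighbours E w) \<le> card ((neighbours E w - S) \<union> (S \<inter> V1))"
    using finite_S finite_subset[OF neighbours_V2_subset[OF w] finite_V1] by (intro card_mono) auto
  also have "\<dots> \<le> card (neighbours E w - S) + card (S \<inter> V1)" by (rule card_Un_le)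
  finally have "card (neighbours E w) \<le> card (neighbours E w - S) + card (S \<inter> V1)" .
  moreover have "3 * N < 4 * card (neighbours E w)" using w by (intro dense) blast
  ultimately show ?thesis using card_cover_side_less small by linarith
qed

lemma card_B: "card B = card S + card ((B - S) \<inter> V1) + card ((B - S) \<inter> V2)"
proof -
  have "finite B" using finite_subset[OF B_subset] finite_V1 finite_V2 by simp
  then have "card B = card S + card (B - S)" using card_Int_Diff[of B S] S_subset by (simp add: Int_absorb1)
  moreover have "card (B - S) = card ((B - S) \<inter> V1) + card ((B - S) \<inter> V2)"
    using B_subset by (intro card_sides) blast
  ultimately show ?thesis by simp
qed

lemma card_large_blue_sides_le:
  assumes U1: "U1 \<subseteq> V1" "N \<le> 2 * card U1" and U2: "U2 \<subseteq> V2" "N \<le> 2 * card U2"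
    and blue: "\<And>y z. y \<in> U1 \<Longrightarrow> z \<in> U2 \<Longrightarrow> {y, z} \<in> E \<Longrightarrow> {y, z} \<in> blue"
  shows "card U1 + card U2 \<le> card B"
proof -
  have "0 < card V1" using card_V1 card_S two_n_le by linarith
  then have "V1 \<union> V2 \<noteq> {}" by auto
  moreover have "U1 \<union> U2 \<subseteq> V1 \<union> V2" using U1(1) U2(1) by blast
  ultimately obtain C where C: "is_component (V1 \<union> V2) blue C" "U1 \<union> U2 \<subseteq> C"
    using pairwise_reachable_in_component[OF _ _ large_sides_reachable[OF U1 U2 blue]] by blast
  have "U1 \<inter> U2 = {}" using U1(1) U2(1) disjoint by blast
  then have "card U1 + card U2 = card (U1 \<union> U2)"
    using card_Un_disjoint[OF finite_subset[OF U1(1) finite_V1] finite_subset[OF U2(1) finite_V2]]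
    by simp
  also have "\<dots> \<le> card C"
    using C(2) finite_subset[OF component_subset[OF C(1)]] finite_V1 finite_V2 by (simp add: card_mono)
  also have "\<dots> \<le> card B" using C(1) by (rule B_largest)
  finally show ?thesis .
qed

lemma cross_red_reachable:
  assumes x: "x \<in> (B - S) \<inter> V1" and w: "w \<in> (B - S) \<inter> V2"
  shows "red_reachable x w"
proof (rule ccontr)
  assume unreachable: "\<not> red_reachable x w"
  have small1: "4 * card ((B - S) \<inter> V1) < N"
    using side_small_if_unreachable[OF x w unreachable] .
  have "\<not> reachable (V2 \<union> V1) (E - blue) w x"
    using unreachable reachable_sym by (metis Un_commute)
  then have small2: "4 * card ((B - S) \<inter> V2) < N"
    using largest_blue_component.side_small_if_unreachable[OF largest_blue_component_swap w x] by blast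
  define U1 where "U1 = neighbours E w - S"
  define U2 where "U2 = neighbours E x - S"
  have U1: "U1 \<subseteq> V1" "N < 2 * card U1"
    using neighbours_V2_subset[of w] uncovered_neighbours_large[OF _ small2] w unfolding U1_def by auto
  have U2: "U2 \<subseteq> V2" "N < 2 * card U2"
    using neighbours_V1_subset[of x] x
      largest_blue_component.uncovered_neighbours_large[OF largest_blue_component_swap _ small1]
    unfolding U2_def by auto
  have blue: "{y, z} \<in> blue" if "y \<in> U1" "z \<in> U2" "{y, z} \<in> E" for y z
  proof (rule ccontr)
    assume "{y, z} \<notin> blue"
    then have "red_reachable y z"
      using that U1(1) U2(1) by (simp add: reachable_edge subset_iff)
    moreover have "red_reachable w y" "red_reachable x z"
      using uncovered_edge_red that w x unfolding U1_def U2_def by simp_all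
    ultimately have "red_reachable x w" using reachable_sym rtranclp_trans by metis
    then show False using unreachable by contradiction
  qed
  have "card U1 + card U2 \<le> card B"
    using card_large_blue_sides_le[OF U1(1) less_imp_le[OF U1(2)] U2(1) less_imp_le[OF U2(2)] blue] .
  then show False using card_B small1 small2 U1(2) U2(2) card_S two_n_le by linarith
qed

lemma uncovered_red_reachable:
  assumes "x \<in> B - S" and "y \<in> B - S"
  shows "red_reachable x y"
proof -
  have sides: "v \<in> V1 \<or> v \<in> V2" if "v \<in> B - S" for v using that B_subset by blast
  have swapped_same_side: "red_reachable x y" if "x \<in> (B - S) \<inter> V2" "y \<in> (B - S) \<inter> V2"
    using largest_blue_component.same_side_red_reachable[OF largest_blue_component_swap that]
    by (simp add: Un_commute)
  show ?thesis
    using sides[OF assms(1)] sides[OF assms(2)]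
  proof (elim disjE)
    assume "x \<in> V1" "y \<in> V1"
    then show ?thesis using same_side_red_reachable assms by simp
  next
    assume "x \<in> V1" "y \<in> V2"
    then show ?thesis using cross_red_reachable assms by simp
  next
    assume "x \<in> V2" "y \<in> V1"
    then show ?thesis using cross_red_reachable[of y x] reachable_sym assms by simp
  next
    assume "x \<in> V2" "y \<in> V2"
    then show ?thesis using swapped_same_side assms by simp
  qed
qed

theorem uncovered_in_red_component: "\<exists>R. is_component (V1 \<union> V2) (E - blue) R \<and> B - S \<subseteq> R"
proof (rule pairwise_reachable_in_component)
  have "0 < N" using card_S two_n_le by linarith
  then show "V1 \<union> V2 \<noteq> {}" using card_V1 by auto
  show "B - S \<subseteq> V1 \<union> V2" using B_subset by blast
qed (rule uncovered_red_reachable)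

end

theorem lemma3p2:
  fixes V1 V2 :: "'a set" and E blue :: "'a set set" and m n :: nat
    and B S :: "'a set"
  assumes "0 < n" and "n < m"
    and "finite V1" and "finite V2" and "V1 \<inter> V2 = {}"
    and "card V1 = m + n - 1" and "card V2 = m + n - 1"
    and "E \<subseteq> {{u, v} | u v. u \<in> V1 \<and> v \<in> V2}"
    and "\<forall>v \<in> V1 \<union> V2. real (degree E v) > 3 / 4 * real (m + n - 1)"
    and "blue \<subseteq> E"
    and "\<not> has_connected_matching (V1 \<union> V2) blue n"
    and "is_component (V1 \<union> V2) blue B"
    and "\<forall>C. is_component (V1 \<union> V2) blue C \<longrightarrow> card C \<le> card B"
    and "card (B \<inter> V1) \<ge> n" and "card (B \<inter> V2) \<ge> n"
    and "is_min_vertex_cover_comp blue B S"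
  shows "\<exists>R. is_component (V1 \<union> V2) (E - blue) R \<and> B - S \<subseteq> R"
proof -
  have dense: "3 * (m + n - 1) < 4 * card (neighbours E v)" if "v \<in> V1 \<union> V2" for v
  proof -
    have "3 / 4 * real (m + n - 1) < real (degree E v)" using assms(9) that by blast
    then have "real (3 * (m + n - 1)) < real (4 * degree E v)" by simp
    then show ?thesis unfolding of_nat_less_iff degree_def neighbours_def .
  qed
  interpret dense_bipartite V1 V2 E "m + n - 1"
    using assms(3-8) dense by unfold_locales
  have "blue \<subseteq> {{u, v} | u v. u \<in> V1 \<and> v \<in> V2}" using assms(8,10) by (rule subset_trans[rotated])
  then have "card S < n" by (rule min_vertex_cover_card_less[OF assms(3-5) _ assms(11,12,16)])
  moreover have "is_vertex_cover_comp blue B S"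
    using assms(16) unfolding is_min_vertex_cover_comp_def by blast
  ultimately interpret largest_blue_component V1 V2 E "m + n - 1" blue B S n
    using assms(2,12-15) by unfold_locales auto
  show ?thesis by (rule uncovered_in_red_component)
qed

end
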